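(* For every $l\ge\max(|\vec n_1|,|\vec n_2|)$ and all $a'=1,\dots,p_1$, $b'=1,\dots,p_2$, $$(x-y)K^{[l]}_{b',a'}(x,y)=\sum_{b=1}^{p_2}\bar A^{(l)}_{+b,b'}(x)A^{(l-1)}_{-b,a'}(y)-\sum_{a=1}^{p_1}\bar A^{(l-1)}_{-a,b'}(x)A^{(l)}_{+a,a'}(y),$$ $$(x-y)K^{[l]}(x,y)=\sum_{b=1}^{p_2}\bar Q^{(l)}_{+b}(x)Q^{(l-1)}_{-b}(y)-\sum_{a=1}^{p_1}\bar Q^{(l-1)}_{-a}(x)Q^{(l)}_{+a}(y).$$
   Context: Setting: $\mu$ finite Borel measure on an interval, weights $w_{1,a}$ ($a\le p_1$), $w_{2,b}$ ($b\le p_2$), compositions $\vec n_\ell=(n_{\ell,1},\dots,n_{\ell,p_\ell})\in\mathbb N^{p_\ell}$, $|\vec n_\ell|=\sum_an_{\ell,a}$. Each $i\in\mathbb Z_+$ is uniquely $i=q|\vec n_\ell|+n_{\ell,1}+\dots+n_{\ell,a-1}+r$ ($0\le r<n_{\ell,a}$); $a_\ell(i)=a$, $k_\ell(i)=qn_{\ell,a}+r$. $\chi_{\ell,a}(x)$: semi-infinite vector with $i$-th entry $x^{k_\ell(i)}$ if $a_\ell(i)=a$, else $0$; superscript $(i)$ = $i$-th entry, $[l]$ = first $l$ entries. Moment matrix $g_{i,j}=\int x^{k_1(i)+k_2(j)}w_{1,a_1(i)}w_{2,a_2(j)}d\mu$, $g^{[l]}=(g_{i,j})_{0\le i,j<l}$,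 with all $\det g^{[l]}\ne0$ and Gauss–Borel factorization $g=S^{-1}\bar S$ ($S$ unit lower triangular, $\bar S$ upper triangular invertible). $A^{(k)}_a$ = $k$-th entry of $S\chi_{1,a}$, $\bar A^{(k)}_b$ = $k$-th entry of $(\bar S^{-1})^\top\chi_{2,b}$, $Q^{(k)}=\sum_aA^{(k)}_aw_{1,a}$, $\bar Q^{(k)}=\sum_b\bar A^{(k)}_bw_{2,b}$. Kernels: $K^{[l]}_{b',a'}(x,y)=\sum_{k=0}^{l-1}\bar A^{(k)}_{b'}(x)A^{(k)}_{a'}(y)$, $K^{[l]}(x,y)=\sum_{k=0}^{l-1}Q^{(k)}(y)\bar Q^{(k)}(x)$. For an integer $m$ and $a\in\{1,\dots,p_1\}$: $m_{+a}$ is the smallest integer $\ge m$ with $a_1(m_{+a})=a$, and $m_{-a}$ the largest integer $\le m$ with $a_1(m_{-a})=a$; $\bar m_{\pm b}$ are defined likewise using $a_2$ and $b\in\{1,\dots,p_2\}$. $e_j$ denotes the $j$-th canonical basis vector (of the appropriate finite length). Associated polynomials: $A^{(l)}_{+a,a'}(y)=\chi_{1,a'}^{(l_{+a})}(y)-(g_{l_{+a},0},\dots,g_{l_{+a},l-1})(g^{[l]})^{-1}\chi_{1,a'}^{[l]}(y)$; $\bar A^{(m)}_{-a,b'}(x)=(\chi_{2,b'}^{[m+1]}(x))^\top(g^{[m+1]})^{-1}e_{m_{-a}}$; $A^{(m)}_{-b,a'}(y)=e_{\bar m_{-b}}^\top(g^{[m+1]})^{-1}\chi_{1,a'}^{[m+1]}(y)$;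 $\bar A^{(l)}_{+b,b'}(x)=\chi_{2,b'}^{(\bar l_{+b})}(x)-(\chi_{2,b'}^{[l]}(x))^\top(g^{[l]})^{-1}(g_{0,\bar l_{+b}},\dots,g_{l-1,\bar l_{+b}})^\top$. Associated linear forms: $Q^{(m)}_{\pm a}=\sum_{a'}A^{(m)}_{+a,a'}w_{1,a'}$ (for $+$), $\bar Q^{(m)}_{-a}=\sum_{b'}\bar A^{(m)}_{-a,b'}w_{2,b'}$, $Q^{(m)}_{-b}=\sum_{a'}A^{(m)}_{-b,a'}w_{1,a'}$, $\bar Q^{(m)}_{+b}=\sum_{b'}\bar A^{(m)}_{+b,b'}w_{2,b'}$. *)

theory Defs
  imports "HOL-Analysis.Analysis" "Jordan_Normal_Form.Determinant"
    "Jordan_Normal_Form.Gauss_Jordan_Elimination"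
begin

(* A composition \<vec>n = (n 1, ..., n p) is represented by n :: nat \<Rightarrow> nat (only n 1..n p used). *)

definition csize :: "(nat \<Rightarrow> nat) \<Rightarrow> nat \<Rightarrow> nat" where
  "csize n p = (\<Sum>c=1..p. n c)"

(* i = q |n| + n_1 + ... + n_(a-1) + r, 0 \<le> r < n_a :  a(i) and k(i) *)
definition idx_a :: "(nat \<Rightarrow> nat) \<Rightarrow> nat \<Rightarrow> nat \<Rightarrow> nat" where
  "idx_a n p i = (LEAST a. i mod csize n p < (\<Sum>c=1..a. n c))"

definition idx_k :: "(nat \<Rightarrow> nat) \<Rightarrow> nat \<Rightarrow> nat \<Rightarrow> nat" where
  "idx_k n p i = (i div csize n p) * n (idx_a n p i)
      + (i mod csize n p - (\<Sum>c=1..idx_a n p i - 1. n c))"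

definition chi :: "(nat \<Rightarrow> nat) \<Rightarrow> nat \<Rightarrow> nat \<Rightarrow> real \<Rightarrow> nat \<Rightarrow> real" where
  "chi n p a x i = (if idx_a n p i = a then x ^ idx_k n p i else 0)"

definition moment :: "real measure \<Rightarrow> (nat \<Rightarrow> real \<Rightarrow> real) \<Rightarrow> (nat \<Rightarrow> real \<Rightarrow> real)
    \<Rightarrow> (nat \<Rightarrow> nat) \<Rightarrow> nat \<Rightarrow> (nat \<Rightarrow> nat) \<Rightarrow> nat \<Rightarrow> nat \<Rightarrow> nat \<Rightarrow> real" where
  "moment \<mu> w1 w2 n1 p1 n2 p2 i j =
     integral\<^sup>L \<mu> (\<lambda>x. x ^ (idx_k n1 p1 i + idx_k n2 p2 j)
                        * w1 (idx_a n1 p1 i) x * w2 (idx_a n2 p2 j) x)"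

definition trunc :: "(nat \<Rightarrow> nat \<Rightarrow> real) \<Rightarrow> nat \<Rightarrow> real mat" where
  "trunc g l = mat l l (\<lambda>(i,j). g i j)"

definition truncinv :: "(nat \<Rightarrow> nat \<Rightarrow> real) \<Rightarrow> nat \<Rightarrow> real mat" where
  "truncinv g l = the (mat_inverse (trunc g l))"

definition idx_plus :: "(nat \<Rightarrow> nat) \<Rightarrow> nat \<Rightarrow> nat \<Rightarrow> nat \<Rightarrow> nat" where
  "idx_plus n p a m = (LEAST i. m \<le> i \<and> idx_a n p i = a)"

definition idx_minus :: "(nat \<Rightarrow> nat) \<Rightarrow> nat \<Rightarrow> nat \<Rightarrow> nat \<Rightarrow> nat" where
  "idx_minus n p a m = (GREATEST i. i \<le> m \<and> idx_a n p i = a)"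

definition Aplus where
  "Aplus g n1 p1 l a a' y =
     chi n1 p1 a' y (idx_plus n1 p1 a l)
     - (\<Sum>i<l. \<Sum>j<l. g (idx_plus n1 p1 a l) i * (truncinv g l $$ (i,j)) * chi n1 p1 a' y j)"

definition Abar_minus where
  "Abar_minus g n1 p1 n2 p2 m a b' x =
     (\<Sum>i<Suc m. chi n2 p2 b' x i * (truncinv g (Suc m) $$ (i, idx_minus n1 p1 a m)))"

definition Aminus where
  "Aminus g n1 p1 n2 p2 m b a' y =
     (\<Sum>j<Suc m. (truncinv g (Suc m) $$ (idx_minus n2 p2 b m, j)) * chi n1 p1 a' y j)"

definition Abar_plus where
  "Abar_plus g n2 p2 l b b' x =
     chi n2 p2 b' x (idx_plus n2 p2 b l)
     - (\<Sum>i<l. \<Sum>j<l. chi n2 p2 b' x i * (truncinv g l $$ (i,j)) * g j (idx_plus n2 p2 b l))"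

(* A^{(k)}_a(y) = k-th entry of S \<chi>_{1,a}(y)  (S unit lower triangular) *)
definition Apol :: "(nat \<Rightarrow> nat \<Rightarrow> real) \<Rightarrow> (nat \<Rightarrow> nat) \<Rightarrow> nat \<Rightarrow> nat \<Rightarrow> nat \<Rightarrow> real \<Rightarrow> real" where
  "Apol S n1 p1 k a y = (\<Sum>j\<le>k. S k j * chi n1 p1 a y j)"

(* \<bar>A^{(k)}_b(x) = k-th entry of (Sbar^{-1})^T \<chi>_{2,b}(x), Sbi = Sbar^{-1} upper triangular *)
definition Abarpol :: "(nat \<Rightarrow> nat \<Rightarrow> real) \<Rightarrow> (nat \<Rightarrow> nat) \<Rightarrow> nat \<Rightarrow> nat \<Rightarrow> nat \<Rightarrow> real \<Rightarrow> real" where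
  "Abarpol Sbi n2 p2 k b x = (\<Sum>j\<le>k. Sbi j k * chi n2 p2 b x j)"

definition Qlf where
  "Qlf S n1 p1 w1 k y = (\<Sum>a=1..p1. Apol S n1 p1 k a y * w1 a y)"

definition Qbarlf where
  "Qbarlf Sbi n2 p2 w2 k x = (\<Sum>b=1..p2. Abarpol Sbi n2 p2 k b x * w2 b x)"

definition Kba where
  "Kba S Sbi n1 p1 n2 p2 l b' a' x y =
     (\<Sum>k<l. Abarpol Sbi n2 p2 k b' x * Apol S n1 p1 k a' y)"

definition Kfull where
  "Kfull S Sbi n1 p1 n2 p2 w1 w2 l x y =
     (\<Sum>k<l. Qlf S n1 p1 w1 k y * Qbarlf Sbi n2 p2 w2 k x)"

definition Qplus where
  "Qplus g n1 p1 w1 m a y = (\<Sum>a'=1..p1. Aplus g n1 p1 m a a' y * w1 a' y)"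

definition Qbar_minus where
  "Qbar_minus g n1 p1 n2 p2 w2 m a x = (\<Sum>b'=1..p2. Abar_minus g n1 p1 n2 p2 m a b' x * w2 b' x)"

definition Qminus where
  "Qminus g n1 p1 n2 p2 w1 m b y = (\<Sum>a'=1..p1. Aminus g n1 p1 n2 p2 m b a' y * w1 a' y)"

definition Qbar_plus where
  "Qbar_plus g n2 p2 w2 m b x = (\<Sum>b'=1..p2. Abar_plus g n2 p2 m b b' x * w2 b' x)"

end

theory Submission
  imports Defs
begin

text \<open>By triangularity of the factors, the inverse of the truncation \<open>g\<^sup>[\<^sup>l\<^sup>]\<close> is the
  truncation of \<open>Sbar\<^sup>-\<^sup>1 S\<close>, so both kernels are bilinear forms in the vectors \<open>\<chi>\<close> with matrix
  \<open>(g\<^sup>[\<^sup>l\<^sup>])\<^sup>-\<^sup>1\<close>. Multiplication by \<open>x\<close> or \<open>y\<close> shifts \<open>\<chi>\<close> to the next index of the same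
  colour, and a shift of the row index of \<open>g\<close> equals a shift of its column index. Hence in
  \<open>(x - y) K\<^sup>[\<^sup>l\<^sup>]\<close> everything cancels except the contributions of the indices whose shift
  leaves \<open>{0..<l}\<close>; for \<open>l \<ge> |n|\<close> these are the indices \<open>(l-1)\<^sub>-\<^sub>a\<close>, one per colour,
  shifted to \<open>l\<^sub>+\<^sub>a\<close>, and they produce the associated polynomials.\<close>

section \<open>Indexing by a composition\<close>

definition idx_of :: "(nat \<Rightarrow> nat) \<Rightarrow> nat \<Rightarrow> nat \<Rightarrow> nat \<Rightarrow> nat" where
  "idx_of n p a k = (k div n a) * csize n p + ((\<Sum>c=1..a-1. n c) + k mod n a)"

definition next_idx :: "(nat \<Rightarrow> nat) \<Rightarrow> nat \<Rightarrow> nat \<Rightarrow> nat" where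
  "next_idx n p i = idx_of n p (idx_a n p i) (Suc (idx_k n p i))"

locale composition =
  fixes n :: "nat \<Rightarrow> nat" and p :: nat
  assumes p_pos: "1 \<le> p" and parts_pos: "\<And>c. c \<in> {1..p} \<Longrightarrow> 0 < n c"
begin

abbreviation psum :: "nat \<Rightarrow> nat" where "psum a \<equiv> \<Sum>c=1..a. n c"

lemma psum_mono: "a \<le> b \<Longrightarrow> psum a \<le> psum b"
  by (rule sum_mono2) auto

lemma psum_pred: "1 \<le> a \<Longrightarrow> psum a = psum (a - 1) + n a"
  by (cases a) auto

lemma psum_le_csize: "a \<le> p \<Longrightarrow> psum a \<le> csize n p"
  unfolding csize_def by (rule psum_mono)

lemma csize_pos: "0 < csize n p"
  using psum_pred[OF p_pos] parts_pos[of p] p_pos unfolding csize_def by auto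

lemma idx_a_bounds:
  shows idx_a_mem: "idx_a n p i \<in> {1..p}"
    and psum_idx_a_le: "psum (idx_a n p i - 1) \<le> i mod csize n p"
    and mod_less_psum_idx_a: "i mod csize n p < psum (idx_a n p i)"
proof -
  let ?r = "i mod csize n p"
  have r_less: "?r < psum p"
    using csize_pos unfolding csize_def by simp
  show r_less_a: "?r < psum (idx_a n p i)"
    unfolding idx_a_def by (rule LeastI[of _ p]) (rule r_less)
  have "idx_a n p i \<le> p"
    unfolding idx_a_def by (rule Least_le) (rule r_less)
  moreover have "idx_a n p i \<noteq> 0"
    using r_less_a by (intro notI) simp
  ultimately show "idx_a n p i \<in> {1..p}" by auto
  show "psum (idx_a n p i - 1) \<le> ?r"
    using not_less_Least[of "idx_a n p i - 1" "\<lambda>a. ?r < psum a"] \<open>idx_a n p i \<noteq> 0\<close>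
    unfolding idx_a_def by simp
qed

lemma idx_a_eqI:
  assumes "1 \<le> a" "psum (a - 1) \<le> i mod csize n p" "i mod csize n p < psum a"
  shows "idx_a n p i = a"
  unfolding idx_a_def
proof (rule Least_equality)
  fix b assume b: "i mod csize n p < psum b"
  show "a \<le> b"
  proof (rule ccontr)
    assume "\<not> a \<le> b"
    then have "psum b \<le> psum (a - 1)" by (intro psum_mono) simp
    then show False using b assms(2) by simp
  qed
qed fact

lemma idx_k_offset_less: "i mod csize n p - psum (idx_a n p i - 1) < n (idx_a n p i)"
  using mod_less_psum_idx_a[of i] psum_idx_a_le[of i] psum_pred[of "idx_a n p i"] idx_a_mem[of i]
  by auto

lemma idx_k_strict_mono:
  assumes same: "idx_a n p i = idx_a n p j" and "i < j"
  shows "idx_k n p i < idx_k n p j"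
proof (cases "i div csize n p = j div csize n p")
  case True
  have "i div csize n p * csize n p + i mod csize n p < j div csize n p * csize n p + j mod csize n p"
    using \<open>i < j\<close> by (simp only: div_mult_mod_eq)
  then have "i mod csize n p < j mod csize n p"
    using True by simp
  then show ?thesis
    using True same psum_idx_a_le[of i] unfolding idx_k_def by simp
next
  case False
  then have "Suc (i div csize n p) \<le> j div csize n p"
    using div_le_mono[of i j "csize n p"] \<open>i < j\<close> by simp
  then have "Suc (i div csize n p) * n (idx_a n p i) \<le> j div csize n p * n (idx_a n p i)"
    by (rule mult_le_mono1)
  then show ?thesis
    using same idx_k_offset_less[of i] unfolding idx_k_def by simp
qed

lemma le_if_idx_k_le: "idx_a n p i = idx_a n p j \<Longrightarrow> idx_k n p i \<le> idx_k n p j \<Longrightarrow> i \<le> j"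
  using idx_k_strict_mono[of j i] by (cases "i \<le> j") auto

lemma psum_add_mod_less_csize:
  assumes "a \<in> {1..p}"
  shows "psum (a - 1) + k mod n a < csize n p"
proof -
  have "0 < n a" using parts_pos assms .
  then have "psum (a - 1) + k mod n a < psum a"
    using psum_pred[of a] assms mod_less_divisor[of "n a" k] by simp
  also have "\<dots> \<le> csize n p" using assms by (intro psum_le_csize) auto
  finally show ?thesis .
qed

lemma idx_of_coordinates:
  assumes a: "a \<in> {1..p}"
  shows idx_a_idx_of: "idx_a n p (idx_of n p a k) = a"
    and idx_k_idx_of: "idx_k n p (idx_of n p a k) = k"
proof -
  have mod: "idx_of n p a k mod csize n p = psum (a - 1) + k mod n a"
    and div: "idx_of n p a k div csize n p = k div n a"
    using psum_add_mod_less_csize[OF a, of k] unfolding idx_of_def by simp_all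
  show a_eq: "idx_a n p (idx_of n p a k) = a"
    using mod psum_pred[of a] parts_pos[OF a] mod_less_divisor[of "n a" k] a
    by (intro idx_a_eqI) auto
  show "idx_k n p (idx_of n p a k) = k"
    using div_mult_mod_eq[of k "n a"] by (simp only: idx_k_def a_eq mod div add_diff_cancel_left')
qed

lemma idx_of_0_less_csize: "a \<in> {1..p} \<Longrightarrow> idx_of n p a 0 < csize n p"
  using psum_add_mod_less_csize[of a 0] by (simp add: idx_of_def)

lemma idx_a_next_idx: "idx_a n p (next_idx n p i) = idx_a n p i"
  and idx_k_next_idx: "idx_k n p (next_idx n p i) = Suc (idx_k n p i)"
  unfolding next_idx_def using idx_of_coordinates[OF idx_a_mem] by simp_all

lemma chi_next_idx: "chi n p a x (next_idx n p i) = x * chi n p a x i"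
  unfolding chi_def idx_a_next_idx idx_k_next_idx by simp

lemma less_next_idx: "i < next_idx n p i"
proof -
  have "i \<le> next_idx n p i"
    by (rule le_if_idx_k_le) (simp_all add: idx_a_next_idx idx_k_next_idx)
  moreover have "next_idx n p i \<noteq> i"
    using idx_k_next_idx[of i] by (intro notI) simp
  ultimately show ?thesis by simp
qed

context
  fixes l :: nat
  assumes l_ge: "csize n p \<le> l"
begin

lemma idx_minus_bounds:
  assumes "a \<in> {1..p}"
  shows idx_minus_less: "idx_minus n p a (l - 1) < l"
    and idx_a_idx_minus: "idx_a n p (idx_minus n p a (l - 1)) = a"
    and le_idx_minus: "\<And>j. j < l \<Longrightarrow> idx_a n p j = a \<Longrightarrow> j \<le> idx_minus n p a (l - 1)"
proof -
  let ?P = "\<lambda>j. j \<le> l - 1 \<and> idx_a n p j = a"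
  have "?P (idx_of n p a 0)"
    using idx_of_0_less_csize[OF assms] idx_a_idx_of[OF assms] l_ge by auto
  then have "?P (idx_minus n p a (l - 1))"
    unfolding idx_minus_def by (rule GreatestI_nat) auto
  moreover have "0 < l" using l_ge csize_pos by simp
  ultimately show "idx_minus n p a (l - 1) < l" "idx_a n p (idx_minus n p a (l - 1)) = a"
    by auto
  fix j assume "j < l" "idx_a n p j = a"
  then show "j \<le> idx_minus n p a (l - 1)"
    unfolding idx_minus_def by (intro Greatest_le_nat[where b = "l - 1"]) auto
qed

lemma next_idx_idx_minus_ge:
  assumes "a \<in> {1..p}"
  shows "l \<le> next_idx n p (idx_minus n p a (l - 1))"
proof (rule ccontr)
  let ?m = "idx_minus n p a (l - 1)"
  assume "\<not> l \<le> next_idx n p ?m"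
  then have "next_idx n p ?m \<le> ?m"
    using le_idx_minus[OF assms] idx_a_next_idx idx_a_idx_minus[OF assms] by simp
  then show False using less_next_idx[of ?m] by simp
qed

lemma crossing_eq_idx_minus:
  assumes "i < l" "l \<le> next_idx n p i"
  shows "i = idx_minus n p (idx_a n p i) (l - 1)"
proof -
  let ?m = "idx_minus n p (idx_a n p i) (l - 1)"
  have "i \<le> ?m" using le_idx_minus[OF idx_a_mem assms(1) refl] .
  moreover have "\<not> i < ?m"
  proof
    assume "i < ?m"
    then have "idx_k n p (next_idx n p i) \<le> idx_k n p ?m"
      using idx_k_strict_mono idx_a_idx_minus idx_a_mem idx_k_next_idx by (simp add: Suc_leI)
    then have "next_idx n p i \<le> ?m"
      using le_if_idx_k_le idx_a_idx_minus idx_a_mem idx_a_next_idx by simp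
    then show False using idx_minus_less idx_a_mem assms by (meson leD order_le_less_trans)
  qed
  ultimately show ?thesis by simp
qed

lemma next_idx_crossing_eq_idx_plus:
  assumes "i < l" "l \<le> next_idx n p i"
  shows "next_idx n p i = idx_plus n p (idx_a n p i) l"
proof -
  let ?P = "\<lambda>j. l \<le> j \<and> idx_a n p j = idx_a n p i"
  let ?q = "idx_plus n p (idx_a n p i) l"
  have next_P: "?P (next_idx n p i)" using assms idx_a_next_idx by simp
  have q: "?P ?q" unfolding idx_plus_def by (rule LeastI[of ?P, OF next_P])
  have q_le: "?q \<le> next_idx n p i" unfolding idx_plus_def by (rule Least_le[of ?P, OF next_P])
  have "\<not> ?q < next_idx n p i"
  proof
    assume "?q < next_idx n p i"
    then have "idx_k n p ?q \<le> idx_k n p i"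
      using idx_k_strict_mono[of ?q "next_idx n p i"] q idx_a_next_idx idx_k_next_idx by simp
    then have "?q \<le> i" using le_if_idx_k_le q by simp
    then show False using q assms by simp
  qed
  then show ?thesis using q_le by simp
qed

lemma crossing_set_eq: "{i. i < l \<and> l \<le> next_idx n p i} = (\<lambda>a. idx_minus n p a (l - 1)) ` {1..p}"
proof (intro subset_antisym subsetI)
  fix i assume "i \<in> {i. i < l \<and> l \<le> next_idx n p i}"
  then have "i = idx_minus n p (idx_a n p i) (l - 1)"
    by (intro crossing_eq_idx_minus) auto
  then show "i \<in> (\<lambda>a. idx_minus n p a (l - 1)) ` {1..p}"
    by (rule image_eqI[OF _ idx_a_mem])
next
  fix i assume "i \<in> (\<lambda>a. idx_minus n p a (l - 1)) ` {1..p}"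
  then show "i \<in> {i. i < l \<and> l \<le> next_idx n p i}"
    using idx_minus_less next_idx_idx_minus_ge by auto
qed

lemma inj_on_idx_minus: "inj_on (\<lambda>a. idx_minus n p a (l - 1)) {1..p}"
  by (rule inj_onI) (metis idx_a_idx_minus)

lemma next_idx_idx_minus: "a \<in> {1..p} \<Longrightarrow> next_idx n p (idx_minus n p a (l - 1)) = idx_plus n p a l"
  using next_idx_crossing_eq_idx_plus[OF idx_minus_less next_idx_idx_minus_ge] idx_a_idx_minus
  by simp

end

end

section \<open>An abstract Christoffel--Darboux identity\<close>

lemma sum_eq_sum_plus_correction:
  fixes f h :: "'b \<Rightarrow> 'a::ab_group_add"
  assumes "finite A" "B \<subseteq> A" "\<And>i. i \<in> A - B \<Longrightarrow> f i = h i"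
  shows "sum f A = sum h A + (\<Sum>i\<in>B. f i - h i)"
proof -
  have "(\<Sum>i\<in>A. f i - h i) = (\<Sum>i\<in>B. f i - h i)"
    using assms by (intro sum.mono_neutral_right) auto
  then show ?thesis by (simp add: sum_subtractf algebra_simps)
qed

text \<open>Writing \<open>U = (U H) g\<close> and \<open>V = g (H V)\<close> below \<open>l\<close>, the bulk of the two double
  sums cancels by the shift symmetry; only the indices whose shift leaves \<open>{..<l}\<close> survive.\<close>

lemma christoffel_darboux_identity:
  fixes g H :: "nat \<Rightarrow> nat \<Rightarrow> 'a::comm_ring_1" and U V :: "nat \<Rightarrow> 'a" and s1 s2 :: "nat \<Rightarrow> nat"
  assumes left_inverse: "\<And>i j. i < l \<Longrightarrow> j < l \<Longrightarrow> (\<Sum>k<l. H i k * g k j) = (if i = j then 1 else 0)"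
    and right_inverse: "\<And>i j. i < l \<Longrightarrow> j < l \<Longrightarrow> (\<Sum>k<l. g i k * H k j) = (if i = j then 1 else 0)"
    and shift: "\<And>i j. g (s1 i) j = g i (s2 j)"
  shows "(\<Sum>i<l. \<Sum>j<l. U (s2 i) * H i j * V j) - (\<Sum>i<l. \<Sum>j<l. U i * H i j * V (s1 j)) =
      (\<Sum>b\<in>{i. i < l \<and> l \<le> s2 i}.
         (U (s2 b) - (\<Sum>i<l. \<Sum>j<l. U i * H i j * g j (s2 b))) * (\<Sum>j<l. H b j * V j))
    - (\<Sum>a\<in>{i. i < l \<and> l \<le> s1 i}.
         (\<Sum>i<l. U i * H i a) * (V (s1 a) - (\<Sum>i<l. \<Sum>j<l. g (s1 a) i * H i j * V j)))"
proof -
  define Z where "Z j = (\<Sum>i<l. U i * H i j)" for j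
  define W where "W i = (\<Sum>j<l. H i j * V j)" for i
  define ZG where "ZG k = (\<Sum>j<l. Z j * g j k)" for k
  define GW where "GW k = (\<Sum>i<l. g k i * W i)" for k
  define B1 where "B1 = {i. i < l \<and> l \<le> s1 i}"
  define B2 where "B2 = {i. i < l \<and> l \<le> s2 i}"
  have ZG_alt: "(\<Sum>i<l. \<Sum>j<l. U i * H i j * g j k) = ZG k" for k
    unfolding ZG_def Z_def by (subst sum.swap) (simp add: sum_distrib_right)
  have GW_alt: "(\<Sum>i<l. \<Sum>j<l. g k i * H i j * V j) = GW k" for k
    unfolding GW_def W_def by (simp add: sum_distrib_left mult.assoc)
  have ZG_eq: "ZG k = U k" if "k < l" for k
  proof -
    have "ZG k = (\<Sum>i<l. U i * (\<Sum>j<l. H i j * g j k))"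
      unfolding ZG_alt[symmetric] by (simp add: sum_distrib_left mult.assoc)
    also have "\<dots> = (\<Sum>i<l. if i = k then U i else 0)"
      using that by (intro sum.cong) (simp_all add: left_inverse)
    finally show ?thesis using that by simp
  qed
  have GW_eq: "GW k = V k" if "k < l" for k
  proof -
    have "GW k = (\<Sum>j<l. (\<Sum>i<l. g k i * H i j) * V j)"
      unfolding GW_alt[symmetric] by (subst sum.swap) (simp add: sum_distrib_right)
    also have "\<dots> = (\<Sum>j<l. if k = j then V j else 0)"
      using that by (intro sum.cong) (simp_all add: right_inverse)
    finally show ?thesis using that by simp
  qed
  have first: "(\<Sum>i<l. \<Sum>j<l. U (s2 i) * H i j * V j)
      = (\<Sum>i<l. ZG (s2 i) * W i) + (\<Sum>i\<in>B2. (U (s2 i) - ZG (s2 i)) * W i)"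
  proof -
    have "(\<Sum>i<l. \<Sum>j<l. U (s2 i) * H i j * V j) = (\<Sum>i<l. U (s2 i) * W i)"
      unfolding W_def by (simp add: sum_distrib_left mult.assoc)
    also have "\<dots> = (\<Sum>i<l. ZG (s2 i) * W i) + (\<Sum>i\<in>B2. U (s2 i) * W i - ZG (s2 i) * W i)"
      by (rule sum_eq_sum_plus_correction) (auto simp: B2_def ZG_eq)
    finally show ?thesis by (simp add: left_diff_distrib)
  qed
  have second: "(\<Sum>i<l. \<Sum>j<l. U i * H i j * V (s1 j))
      = (\<Sum>j<l. Z j * GW (s1 j)) + (\<Sum>j\<in>B1. Z j * (V (s1 j) - GW (s1 j)))"
  proof -
    have "(\<Sum>i<l. \<Sum>j<l. U i * H i j * V (s1 j)) = (\<Sum>j<l. Z j * V (s1 j))"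
      unfolding Z_def by (subst sum.swap) (simp add: sum_distrib_right)
    also have "\<dots> = (\<Sum>j<l. Z j * GW (s1 j)) + (\<Sum>j\<in>B1. Z j * V (s1 j) - Z j * GW (s1 j))"
      by (rule sum_eq_sum_plus_correction) (auto simp: B1_def GW_eq)
    finally show ?thesis by (simp add: right_diff_distrib)
  qed
  have bulk: "(\<Sum>i<l. ZG (s2 i) * W i) = (\<Sum>j<l. Z j * GW (s1 j))"
  proof -
    have "(\<Sum>i<l. ZG (s2 i) * W i) = (\<Sum>i<l. \<Sum>j<l. Z j * (g j (s2 i) * W i))"
      unfolding ZG_def by (simp add: sum_distrib_right mult.assoc)
    also have "\<dots> = (\<Sum>j<l. \<Sum>i<l. Z j * (g j (s2 i) * W i))"
      by (rule sum.swap)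
    finally show ?thesis
      unfolding GW_def shift by (simp add: sum_distrib_left)
  qed
  show ?thesis
    unfolding first second bulk ZG_alt GW_alt Z_def[symmetric] W_def[symmetric]
      B1_def[symmetric] B2_def[symmetric]
    by simp
qed

section \<open>The truncated moment matrix and its Gauss--Borel factorization\<close>

lemma mult_mat_entry_sum:
  assumes "A \<in> carrier_mat l l" "B \<in> carrier_mat l l" "i < l" "j < l"
  shows "(A * B) $$ (i, j) = (\<Sum>k<l. A $$ (i, k) * B $$ (k, j))"
  using assms by (simp add: scalar_prod_def atLeast0LessThan)

lemma truncinv_inverse:
  assumes "det (trunc g l) \<noteq> 0"
  shows "trunc g l * truncinv g l = 1\<^sub>m l" "truncinv g l * trunc g l = 1\<^sub>m l"
    "truncinv g l \<in> carrier_mat l l"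
proof -
  have G: "trunc g l \<in> carrier_mat l l" unfolding trunc_def by simp
  obtain B where "mat_inverse (trunc g l) = Some B"
    using mat_inverse(1)[OF G, where b = "()"] det_non_zero_imp_unit[OF G assms, where b = "()"]
    by (cases "mat_inverse (trunc g l)") auto
  then show "trunc g l * truncinv g l = 1\<^sub>m l" "truncinv g l * trunc g l = 1\<^sub>m l"
    "truncinv g l \<in> carrier_mat l l"
    using mat_inverse(2)[OF G] unfolding truncinv_def by auto
qed

lemma truncinv_entry_inverse:
  assumes "det (trunc g l) \<noteq> 0" "i < l" "j < l"
  shows "(\<Sum>k<l. truncinv g l $$ (i, k) * g k j) = (if i = j then 1 else 0)"
    and "(\<Sum>k<l. g i k * truncinv g l $$ (k, j)) = (if i = j then 1 else 0)"
proof -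
  have G: "trunc g l \<in> carrier_mat l l" and G_entry: "\<And>i j. i < l \<Longrightarrow> j < l \<Longrightarrow> trunc g l $$ (i, j) = g i j"
    unfolding trunc_def by simp_all
  note H = truncinv_inverse[OF assms(1)]
  show "(\<Sum>k<l. truncinv g l $$ (i, k) * g k j) = (if i = j then 1 else 0)"
    using mult_mat_entry_sum[OF H(3) G assms(2,3)] H(2) assms G_entry by simp
  show "(\<Sum>k<l. g i k * truncinv g l $$ (k, j)) = (if i = j then 1 else 0)"
    using mult_mat_entry_sum[OF G H(3) assms(2,3)] H(1) assms G_entry by simp
qed

lemma sum_atMost_eq_sum_lessThan:
  fixes f :: "nat \<Rightarrow> 'a::comm_monoid_add"
  assumes "k < l" "\<And>i. k < i \<Longrightarrow> f i = 0"
  shows "(\<Sum>i\<le>k. f i) = (\<Sum>i<l. f i)"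
  by (rule sum.mono_neutral_left) (use assms in auto)

lemma truncinv_eq_gauss_borel:
  fixes S Sbar Sbi :: "nat \<Rightarrow> nat \<Rightarrow> real"
  assumes nondeg: "det (trunc g l) \<noteq> 0"
    and S_lower: "\<And>i j. i < j \<Longrightarrow> S i j = 0"
    and Sbar_upper: "\<And>i j. j < i \<Longrightarrow> Sbar i j = 0"
    and gauss_borel: "\<And>i j. (\<Sum>k\<le>i. S i k * g k j) = Sbar i j"
    and Sbi_left: "\<And>i j. (\<Sum>k\<le>j. Sbi i k * Sbar k j) = (if i = j then 1 else 0)"
    and "i < l" "j < l"
  shows "truncinv g l $$ (i, j) = (\<Sum>k<l. Sbi i k * S k j)"
proof -
  define G H where "G = trunc g l" and "H = truncinv g l"
  define Sm Sbim Sbarm where "Sm = mat l l (\<lambda>(i, j). S i j)"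
    and "Sbim = mat l l (\<lambda>(i, j). Sbi i j)" and "Sbarm = mat l l (\<lambda>(i, j). Sbar i j)"
  note H = truncinv_inverse[OF nondeg, folded G_def H_def]
  have carrier: "G \<in> carrier_mat l l" "Sm \<in> carrier_mat l l" "Sbim \<in> carrier_mat l l"
    "Sbarm \<in> carrier_mat l l"
    unfolding G_def trunc_def Sm_def Sbim_def Sbarm_def by auto
  have SG: "Sm * G = Sbarm"
  proof (rule eq_matI)
    fix i j assume "i < dim_row Sbarm" "j < dim_col Sbarm"
    then have ij: "i < l" "j < l" unfolding Sbarm_def by auto
    have "(Sm * G) $$ (i, j) = (\<Sum>k<l. S i k * g k j)"
      using mult_mat_entry_sum[OF carrier(2,1) ij] ij unfolding Sm_def G_def trunc_def by simp
    also have "\<dots> = (\<Sum>k\<le>i. S i k * g k j)"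
      using S_lower by (intro sum_atMost_eq_sum_lessThan[symmetric] ij) auto
    finally show "(Sm * G) $$ (i, j) = Sbarm $$ (i, j)"
      using gauss_borel ij unfolding Sbarm_def by simp
  qed (use carrier in auto)
  have SbiSbar: "Sbim * Sbarm = 1\<^sub>m l"
  proof (rule eq_matI)
    fix i j assume "i < dim_row (1\<^sub>m l :: real mat)" "j < dim_col (1\<^sub>m l :: real mat)"
    then have ij: "i < l" "j < l" by auto
    have "(Sbim * Sbarm) $$ (i, j) = (\<Sum>k<l. Sbi i k * Sbar k j)"
      using mult_mat_entry_sum[OF carrier(3,4) ij] ij unfolding Sbim_def Sbarm_def by simp
    also have "\<dots> = (\<Sum>k\<le>j. Sbi i k * Sbar k j)"
      using Sbar_upper by (intro sum_atMost_eq_sum_lessThan[symmetric] ij) auto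
    finally show "(Sbim * Sbarm) $$ (i, j) = 1\<^sub>m l $$ (i, j)"
      using Sbi_left ij by simp
  qed (use carrier in auto)
  have "Sbim * Sm = (Sbim * Sm) * (G * H)" using H carrier by simp
  also have "\<dots> = (Sbim * (Sm * G)) * H"
    using carrier H by (simp add: assoc_mult_mat[of _ l l _ l _ l])
  also have "\<dots> = H" unfolding SG SbiSbar using H by simp
  finally have "H = Sbim * Sm" by simp
  then show ?thesis
    using mult_mat_entry_sum[OF carrier(3,2) assms(6,7)] assms(6,7)
    unfolding H_def Sbim_def Sm_def by simp
qed

lemma Kba_eq_bilinear:
  assumes S_lower: "\<And>i j. i < j \<Longrightarrow> S i j = 0" and Sbi_upper: "\<And>i j. j < i \<Longrightarrow> Sbi i j = 0"
  shows "Kba S Sbi n1 p1 n2 p2 l b' a' x y =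
    (\<Sum>i<l. \<Sum>j<l. chi n2 p2 b' x i * (\<Sum>k<l. Sbi i k * S k j) * chi n1 p1 a' y j)"
proof -
  let ?U = "chi n2 p2 b' x" and ?V = "chi n1 p1 a' y"
  have "Kba S Sbi n1 p1 n2 p2 l b' a' x y
      = (\<Sum>k<l. (\<Sum>i<l. Sbi i k * ?U i) * (\<Sum>j<l. S k j * ?V j))"
    unfolding Kba_def Abarpol_def Apol_def
    using sum_atMost_eq_sum_lessThan[of _ l "\<lambda>j. Sbi j _ * ?U j"]
      sum_atMost_eq_sum_lessThan[of _ l "\<lambda>j. S _ j * ?V j"] S_lower Sbi_upper
    by (intro sum.cong) auto
  also have "\<dots> = (\<Sum>k<l. \<Sum>i<l. \<Sum>j<l. ?U i * (Sbi i k * S k j) * ?V j)"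
    unfolding sum_product by (intro sum.cong refl) (simp add: mult_ac)
  also have "\<dots> = (\<Sum>i<l. \<Sum>k<l. \<Sum>j<l. ?U i * (Sbi i k * S k j) * ?V j)"
    by (rule sum.swap)
  also have "\<dots> = (\<Sum>i<l. \<Sum>j<l. \<Sum>k<l. ?U i * (Sbi i k * S k j) * ?V j)"
    by (rule sum.cong[OF refl], rule sum.swap)
  finally show ?thesis
    by (simp add: sum_distrib_left sum_distrib_right)
qed

lemma sum_product_weighted:
  "(\<Sum>k\<in>K. (\<Sum>a\<in>A. f k a * u a) * (\<Sum>b\<in>B. h k b * v b)) =
   (\<Sum>a\<in>A. \<Sum>b\<in>B. u a * v b * (\<Sum>k\<in>K. f k a * h k b :: real))"
proof -
  have "(\<Sum>k\<in>K. (\<Sum>a\<in>A. f k a * u a) * (\<Sum>b\<in>B. h k b * v b)) =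
      (\<Sum>k\<in>K. \<Sum>a\<in>A. \<Sum>b\<in>B. u a * v b * (f k a * h k b))"
    by (simp add: sum_product mult_ac)
  also have "\<dots> = (\<Sum>a\<in>A. \<Sum>k\<in>K. \<Sum>b\<in>B. u a * v b * (f k a * h k b))"
    by (rule sum.swap)
  also have "\<dots> = (\<Sum>a\<in>A. \<Sum>b\<in>B. \<Sum>k\<in>K. u a * v b * (f k a * h k b))"
    by (rule sum.cong[OF refl], rule sum.swap)
  finally show ?thesis by (simp add: sum_distrib_left)
qed

locale gauss_borel_moments = c1: composition n1 p1 + c2: composition n2 p2
  for n1 p1 n2 p2 +
  fixes g S Sbar Sbi :: "nat \<Rightarrow> nat \<Rightarrow> real"
  assumes shift_symmetric: "\<And>i j. g (next_idx n1 p1 i) j = g i (next_idx n2 p2 j)"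
    and nondeg: "\<And>l. det (trunc g l) \<noteq> 0"
    and S_lower: "\<And>i j. i < j \<Longrightarrow> S i j = 0"
    and Sbar_upper: "\<And>i j. j < i \<Longrightarrow> Sbar i j = 0"
    and gauss_borel: "\<And>i j. (\<Sum>k\<le>i. S i k * g k j) = Sbar i j"
    and Sbi_upper: "\<And>i j. j < i \<Longrightarrow> Sbi i j = 0"
    and Sbi_left: "\<And>i j. (\<Sum>k\<le>j. Sbi i k * Sbar k j) = (if i = j then 1 else 0)"
begin

lemma Kba_eq_truncinv_bilinear:
  "Kba S Sbi n1 p1 n2 p2 l b' a' x y =
    (\<Sum>i<l. \<Sum>j<l. chi n2 p2 b' x i * truncinv g l $$ (i, j) * chi n1 p1 a' y j)"
proof -
  have "Kba S Sbi n1 p1 n2 p2 l b' a' x y =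
      (\<Sum>i<l. \<Sum>j<l. chi n2 p2 b' x i * (\<Sum>k<l. Sbi i k * S k j) * chi n1 p1 a' y j)"
    by (rule Kba_eq_bilinear) (fact S_lower Sbi_upper)+
  also have "\<dots> = (\<Sum>i<l. \<Sum>j<l. chi n2 p2 b' x i * truncinv g l $$ (i, j) * chi n1 p1 a' y j)"
    by (intro sum.cong refl)
      (simp add: truncinv_eq_gauss_borel[OF nondeg S_lower Sbar_upper gauss_borel Sbi_left])
  finally show ?thesis .
qed

lemma Kba_christoffel_darboux:
  assumes l: "max (csize n1 p1) (csize n2 p2) \<le> l" and "a' \<in> {1..p1}" "b' \<in> {1..p2}"
  shows "(x - y) * Kba S Sbi n1 p1 n2 p2 l b' a' x y =
      (\<Sum>b=1..p2. Abar_plus g n2 p2 l b b' x * Aminus g n1 p1 n2 p2 (l - 1) b a' y)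
    - (\<Sum>a=1..p1. Abar_minus g n1 p1 n2 p2 (l - 1) a b' x * Aplus g n1 p1 l a a' y)"
proof -
  let ?U = "chi n2 p2 b' x" and ?V = "chi n1 p1 a' y" and ?H = "\<lambda>i j. truncinv g l $$ (i, j)"
  let ?s1 = "next_idx n1 p1" and ?s2 = "next_idx n2 p2"
  have l1: "csize n1 p1 \<le> l" and l2: "csize n2 p2 \<le> l" using l by auto
  have Suc_pred: "Suc (l - 1) = l" using l1 c1.csize_pos by simp
  have "(x - y) * Kba S Sbi n1 p1 n2 p2 l b' a' x y
      = (x - y) * (\<Sum>i<l. \<Sum>j<l. ?U i * ?H i j * ?V j)"
    by (simp only: Kba_eq_truncinv_bilinear)
  also have "\<dots> = (\<Sum>i<l. \<Sum>j<l. ?U (?s2 i) * ?H i j * ?V j)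
      - (\<Sum>i<l. \<Sum>j<l. ?U i * ?H i j * ?V (?s1 j))"
    unfolding c1.chi_next_idx c2.chi_next_idx
    by (simp add: sum_distrib_left left_diff_distrib sum_subtractf mult_ac)
  also have "\<dots> =
      (\<Sum>b\<in>{i. i < l \<and> l \<le> ?s2 i}.
         (?U (?s2 b) - (\<Sum>i<l. \<Sum>j<l. ?U i * ?H i j * g j (?s2 b))) * (\<Sum>j<l. ?H b j * ?V j))
    - (\<Sum>a\<in>{i. i < l \<and> l \<le> ?s1 i}.
         (\<Sum>i<l. ?U i * ?H i a) * (?V (?s1 a) - (\<Sum>i<l. \<Sum>j<l. g (?s1 a) i * ?H i j * ?V j)))"
    by (rule christoffel_darboux_identity)
      (simp_all add: truncinv_entry_inverse[OF nondeg] shift_symmetric)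
  also have "\<dots> =
      (\<Sum>b=1..p2. Abar_plus g n2 p2 l b b' x * Aminus g n1 p1 n2 p2 (l - 1) b a' y)
    - (\<Sum>a=1..p1. Abar_minus g n1 p1 n2 p2 (l - 1) a b' x * Aplus g n1 p1 l a a' y)"
    unfolding c1.crossing_set_eq[OF l1] c2.crossing_set_eq[OF l2]
      sum.reindex[OF c1.inj_on_idx_minus[OF l1]] sum.reindex[OF c2.inj_on_idx_minus[OF l2]]
    by (intro arg_cong2[where f = minus] sum.cong refl)
      (simp_all only: o_def c1.next_idx_idx_minus[OF l1] c2.next_idx_idx_minus[OF l2]
        Abar_plus_def Aminus_def Abar_minus_def Aplus_def Suc_pred)
  finally show ?thesis .
qed

lemma Kfull_christoffel_darboux:
  assumes l: "max (csize n1 p1) (csize n2 p2) \<le> l"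
  shows "(x - y) * Kfull S Sbi n1 p1 n2 p2 w1 w2 l x y =
      (\<Sum>b=1..p2. Qbar_plus g n2 p2 w2 l b x * Qminus g n1 p1 n2 p2 w1 (l - 1) b y)
    - (\<Sum>a=1..p1. Qbar_minus g n1 p1 n2 p2 w2 (l - 1) a x * Qplus g n1 p1 w1 l a y)"
proof -
  let ?w = "\<lambda>a' b'. w1 a' y * w2 b' x"
  have "(x - y) * Kfull S Sbi n1 p1 n2 p2 w1 w2 l x y
      = (\<Sum>a'=1..p1. \<Sum>b'=1..p2. ?w a' b' * ((x - y) * Kba S Sbi n1 p1 n2 p2 l b' a' x y))"
    unfolding Kfull_def Qlf_def Qbarlf_def sum_product_weighted Kba_def
    by (simp add: sum_distrib_left mult_ac)
  also have "\<dots> = (\<Sum>a'=1..p1. \<Sum>b'=1..p2. ?w a' b' *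
        (\<Sum>b=1..p2. Abar_plus g n2 p2 l b b' x * Aminus g n1 p1 n2 p2 (l - 1) b a' y))
    - (\<Sum>a'=1..p1. \<Sum>b'=1..p2. ?w a' b' *
        (\<Sum>a=1..p1. Abar_minus g n1 p1 n2 p2 (l - 1) a b' x * Aplus g n1 p1 l a a' y))"
    by (simp add: Kba_christoffel_darboux[OF l] right_diff_distrib sum_subtractf)
  also have "\<dots> =
      (\<Sum>b=1..p2. Qbar_plus g n2 p2 w2 l b x * Qminus g n1 p1 n2 p2 w1 (l - 1) b y)
    - (\<Sum>a=1..p1. Qbar_minus g n1 p1 n2 p2 w2 (l - 1) a x * Qplus g n1 p1 w1 l a y)"
    unfolding Qbar_plus_def Qminus_def Qbar_minus_def Qplus_def sum_product_weighted
    by (subst (1 2) sum.swap) (simp add: mult_ac)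
  finally show ?thesis .
qed

end

theorem theorem2p4:
  fixes \<mu> :: "real measure" and I :: "real set"
    and w1 w2 :: "nat \<Rightarrow> real \<Rightarrow> real"
    and n1 n2 :: "nat \<Rightarrow> nat" and p1 p2 :: nat
    and g S Sbar Sbi :: "nat \<Rightarrow> nat \<Rightarrow> real"
  assumes borel: "sets \<mu> = sets (borel :: real measure)"
    and finite: "finite_measure \<mu>"
    and interval: "is_interval I" and supp: "emeasure \<mu> (UNIV - I) = 0"
    and p1: "p1 \<ge> 1" and p2: "p2 \<ge> 1"
    and n1pos: "\<forall>c\<in>{1..p1}. n1 c > 0" and n2pos: "\<forall>c\<in>{1..p2}. n2 c > 0"
    and integrable: "\<forall>i j. integrable \<mu> (\<lambda>x. x ^ (idx_k n1 p1 i + idx_k n2 p2 j)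
                        * w1 (idx_a n1 p1 i) x * w2 (idx_a n2 p2 j) x)"
    and g_def: "g = moment \<mu> w1 w2 n1 p1 n2 p2"
    and nondeg: "\<forall>l. det (trunc g l) \<noteq> 0"
    and S_unit: "\<forall>i. S i i = 1" and S_lower: "\<forall>i j. i < j \<longrightarrow> S i j = 0"
    and Sbar_upper: "\<forall>i j. j < i \<longrightarrow> Sbar i j = 0" and Sbar_diag: "\<forall>i. Sbar i i \<noteq> 0"
    and gauss_borel: "\<forall>i j. (\<Sum>k\<le>i. S i k * g k j) = Sbar i j"
    and Sbi_upper: "\<forall>i j. j < i \<longrightarrow> Sbi i j = 0"
    and Sbi_right: "\<forall>i j. (\<Sum>k\<le>j. Sbar i k * Sbi k j) = (if i = j then 1 else 0)"
    and Sbi_left: "\<forall>i j. (\<Sum>k\<le>j. Sbi i k * Sbar k j) = (if i = j then 1 else 0)"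
  shows "\<forall>l. l \<ge> max (csize n1 p1) (csize n2 p2) \<longrightarrow>
          (\<forall>a'\<in>{1..p1}. \<forall>b'\<in>{1..p2}. \<forall>x y.
             (x - y) * Kba S Sbi n1 p1 n2 p2 l b' a' x y =
               (\<Sum>b=1..p2. Abar_plus g n2 p2 l b b' x * Aminus g n1 p1 n2 p2 (l - 1) b a' y)
             - (\<Sum>a=1..p1. Abar_minus g n1 p1 n2 p2 (l - 1) a b' x * Aplus g n1 p1 l a a' y))
        \<and> (\<forall>x y.
             (x - y) * Kfull S Sbi n1 p1 n2 p2 w1 w2 l x y =
               (\<Sum>b=1..p2. Qbar_plus g n2 p2 w2 l b x * Qminus g n1 p1 n2 p2 w1 (l - 1) b y)
             - (\<Sum>a=1..p1. Qbar_minus g n1 p1 n2 p2 w2 (l - 1) a x * Qplus g n1 p1 w1 l a y))"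
proof -
  interpret c1: composition n1 p1 using p1 n1pos by unfold_locales auto
  interpret c2: composition n2 p2 using p2 n2pos by unfold_locales auto
  have "g (next_idx n1 p1 i) j = g i (next_idx n2 p2 j)" for i j
    unfolding g_def moment_def c1.idx_a_next_idx c1.idx_k_next_idx
      c2.idx_a_next_idx c2.idx_k_next_idx
    by simp
  then interpret gauss_borel_moments n1 p1 n2 p2 g S Sbar Sbi
    using nondeg S_lower Sbar_upper gauss_borel Sbi_upper Sbi_left by unfold_locales auto
  show ?thesis
    using Kba_christoffel_darboux Kfull_christoffel_darboux by blast
qed

end
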